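(* Let $\alpha,\beta>0$ with $\beta>\alpha$, set $\tau=(\beta-\alpha)^{-1}$, and let $S_0>0$, $I_0>0$. Let $(S(t),I(t),R(t))$ be the solution of $$\dot S=-\frac{\beta SI}{S+I},\qquad \dot I=\frac{\beta SI}{S+I}-\alpha I,\qquad \dot R=\alpha I$$ with $S(0)=S_0$, $I(0)=I_0$. Then $\dot I(0)>0$ if and only if $\frac{\beta}{\alpha}-1>\frac{I_0}{S_0}$. Moreover, $I$ attains its maximum (over all real $t$) at $$t_{\mathrm{peak}}=\tau\log\left(\frac{S_0}{I_0}\left(\frac{\beta}{\alpha}-1\right)\right),$$ which is positive if and only if $\frac{\beta}{\alpha}-1>\frac{I_0}{S_0}$, and $$I(t_{\mathrm{peak}})=S_0\left(\frac{\beta}{\alpha}-1\right)\left(\frac{\alpha}{\beta}\left(1+\frac{I_0}{S_0}\right)\right)^{\beta/(\beta-\alpha)}.$$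
   Context: Modified SIR epidemiological model with recovery rate $\alpha$ and transmission rate $\beta$; $S,I,R$ are fractions of susceptible, infective and removed individuals. *)

theory Defs
  imports "HOL-Analysis.Analysis"
begin

end

(*
  Wherever S and I are positive, the ratio I/S satisfies (I/S)' = (beta - alpha) I/S, so
  I/S = (I0/S0) e^((beta - alpha) t), and S (1 + I/S)^kappa with kappa = beta/(beta - alpha)
  has zero derivative. The set of times at which both identities hold (written without
  division) is closed, and it is open because the identities force S, I > 0 there; hence
  it is all of the real line. Consequently I = C x / (1 + x)^kappa with x = I/S, and by
  weighted AM-GM this is largest when x = 1/(kappa - 1) = beta/alpha - 1.
*)

theory Submission
  imports Defs
begin

lemma div_one_plus_powr_le:
  fixes k x :: real
  assumes "k > 1" "x > 0"
  shows "x / (1 + x) powr k \<le> (1 / (k - 1)) / (1 + 1 / (k - 1)) powr k"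
proof -
  \<comment> \<open>weighted AM-GM for \<open>(k - 1) x\<close> and \<open>1\<close> with weights \<open>1/k\<close> and \<open>1 - 1/k\<close>\<close>
  have "((k - 1) * x) powr (1 / k) * 1 powr (1 - 1 / k) \<le> 1 / k * ((k - 1) * x) + (1 - 1 / k) * 1"
    by (rule Youngs_inequality_0) (use assms in auto)
  also have "\<dots> = (k - 1) / k * (1 + x)"
    using assms by (simp add: field_simps)
  finally have "(((k - 1) * x) powr (1 / k)) powr k \<le> ((k - 1) / k * (1 + x)) powr k"
    by (intro powr_mono2) (use assms in auto)
  also have "\<dots> = ((k - 1) / k) powr k * (1 + x) powr k"
    by (rule powr_mult)
  finally have "(k - 1) * x \<le> ((k - 1) / k) powr k * (1 + x) powr k"
    using assms by (simp add: powr_powr)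
  then have "x / (1 + x) powr k \<le> ((k - 1) / k) powr k / (k - 1)"
    using assms by (simp add: divide_simps mult.commute)
  moreover have "1 + 1 / (k - 1) = inverse ((k - 1) / k)"
    using assms by (simp add: field_simps)
  then have "(1 + 1 / (k - 1)) powr k = inverse (((k - 1) / k) powr k)"
    by (simp only: inverse_powr)
  ultimately show ?thesis
    by (simp add: divide_inverse mult.commute)
qed

lemma DERIV_zero_on_ball_eq:
  fixes f :: "real \<Rightarrow> real"
  assumes "\<And>s. s \<in> ball a e \<Longrightarrow> (f has_real_derivative 0) (at s)" and "s \<in> ball a e"
  shows "f s = f a"
proof -
  have "f constant_on ball a e"
    by (rule has_field_derivative_0_imp_constant_on) (use assms(1) in auto)
  moreover have "a \<in> ball a e"
    using assms(2) by (metis centre_in_ball mem_ball zero_le_dist le_less_trans)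
  ultimately show ?thesis
    using assms(2) by (auto simp: constant_on_def)
qed

locale SIR_model =
  fixes \<alpha> \<beta> :: real and S I :: "real \<Rightarrow> real"
  assumes S_deriv: "\<And>t. (S has_real_derivative (- \<beta> * S t * I t / (S t + I t))) (at t)"
    and I_deriv: "\<And>t. (I has_real_derivative (\<beta> * S t * I t / (S t + I t) - \<alpha> * I t)) (at t)"
begin

lemma isCont_S: "isCont S t"
  using S_deriv by (rule DERIV_isCont)

lemma isCont_I: "isCont I t"
  using I_deriv by (rule DERIV_isCont)

lemma ratio_has_derivative:
  assumes "S t \<noteq> 0" "S t + I t \<noteq> 0"
  shows "((\<lambda>t. I t / S t) has_real_derivative (\<beta> - \<alpha>) * (I t / S t)) (at t)"
proof -
  define q where "q = \<beta> * S t * I t / (S t + I t)"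
  have "q * S t + I t * q = q * (S t + I t)"
    by (simp add: algebra_simps)
  also have "\<dots> = \<beta> * S t * I t"
    using assms by (simp add: q_def)
  finally have q: "q * S t + I t * q = \<beta> * S t * I t" .
  have "((\<lambda>t. I t / S t) has_real_derivative ((q - \<alpha> * I t) * S t - I t * - q) / (S t * S t)) (at t)"
    using DERIV_divide[OF I_deriv S_deriv assms(1)] by (simp add: q_def)
  moreover have "((q - \<alpha> * I t) * S t - I t * - q) / (S t * S t) = (\<beta> - \<alpha>) * (I t / S t)"
    using assms(1) q by (simp add: field_simps)
  ultimately show ?thesis
    by simp
qed

lemma conserved_has_derivative:
  assumes "\<beta> \<noteq> \<alpha>" "S t > 0" "S t + I t > 0"
  shows "((\<lambda>t. S t * (1 + I t / S t) powr (\<beta> / (\<beta> - \<alpha>))) has_real_derivative 0) (at t)"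
proof -
  define x k where "x = I t / S t" and "k = \<beta> / (\<beta> - \<alpha>)"
  have x: "1 + x > 0"
    using assms by (simp add: x_def field_simps)
  have dx: "((\<lambda>t. 1 + I t / S t) has_real_derivative (\<beta> - \<alpha>) * (I t / S t)) (at t)"
    using DERIV_add[OF DERIV_const ratio_has_derivative] assms by simp
  have dp: "((\<lambda>t. (1 + I t / S t) powr k) has_real_derivative
      k * (1 + x) powr (k - 1) * ((\<beta> - \<alpha>) * x)) (at t)"
    unfolding x_def by (rule DERIV_chain2[OF has_real_derivative_powr dx]) (use x in \<open>simp add: x_def\<close>)
  have "((\<lambda>t. S t * (1 + I t / S t) powr k) has_real_derivative
      - \<beta> * S t * I t / (S t + I t) * (1 + x) powr k
      + k * (1 + x) powr (k - 1) * ((\<beta> - \<alpha>) * x) * S t) (at t)"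
    unfolding x_def by (rule DERIV_mult[OF S_deriv dp[unfolded x_def]])
  moreover have "- \<beta> * S t * I t / (S t + I t) * (1 + x) powr k
      + k * (1 + x) powr (k - 1) * ((\<beta> - \<alpha>) * x) * S t = 0"
  proof -
    have frac: "- \<beta> * S t * I t / (S t + I t) = - \<beta> * (S t * x / (1 + x))"
      using assms by (simp add: x_def field_simps)
    have powr_split: "(1 + x) powr k = (1 + x) powr (k - 1) * (1 + x)"
      using x by (simp add: powr_diff)
    have "- \<beta> * S t * I t / (S t + I t) * (1 + x) powr k
        + k * (1 + x) powr (k - 1) * ((\<beta> - \<alpha>) * x) * S t
        = (k * (\<beta> - \<alpha>) - \<beta>) * (x * S t * (1 + x) powr (k - 1))"
      unfolding frac powr_split using x by (simp add: field_simps)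
    also have "\<dots> = 0"
      using assms(1) by (simp add: k_def)
    finally show ?thesis .
  qed
  ultimately show ?thesis
    by (simp add: k_def)
qed

lemma scaled_ratio_has_derivative:
  assumes "S t \<noteq> 0" "S t + I t \<noteq> 0"
  shows "((\<lambda>t. I t / S t * exp (- (\<beta> - \<alpha>) * t)) has_real_derivative 0) (at t)"
proof -
  have "((\<lambda>t. exp (- (\<beta> - \<alpha>) * t)) has_real_derivative exp (- (\<beta> - \<alpha>) * t) * - (\<beta> - \<alpha>)) (at t)"
    by (auto intro!: derivative_eq_intros)
  then have "((\<lambda>t. I t / S t * exp (- (\<beta> - \<alpha>) * t)) has_real_derivative
      (\<beta> - \<alpha>) * (I t / S t) * exp (- (\<beta> - \<alpha>) * t)
      + exp (- (\<beta> - \<alpha>) * t) * - (\<beta> - \<alpha>) * (I t / S t)) (at t)"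
    by (intro DERIV_mult ratio_has_derivative assms)
  then show ?thesis
    by (rule DERIV_cong) (use assms in \<open>simp add: field_simps\<close>)
qed

lemma deriv_I_0_pos_iff:
  assumes "\<alpha> > 0" "S 0 > 0" "I 0 > 0"
  shows "deriv I 0 > 0 \<longleftrightarrow> \<beta> / \<alpha> - 1 > I 0 / S 0"
proof -
  have "deriv I 0 = I 0 * (\<beta> * S 0 / (S 0 + I 0) - \<alpha>)"
    using DERIV_imp_deriv[OF I_deriv] by (simp add: algebra_simps)
  also have "\<dots> > 0 \<longleftrightarrow> \<alpha> < \<beta> * S 0 / (S 0 + I 0)"
    using assms by (simp add: zero_less_mult_iff)
  also have "\<dots> \<longleftrightarrow> \<alpha> * (S 0 + I 0) < \<beta> * S 0"
    using assms by (simp add: pos_less_divide_eq)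
  also have "\<dots> \<longleftrightarrow> \<beta> / \<alpha> - 1 > I 0 / S 0"
    using assms by (simp add: field_simps)
  finally show ?thesis .
qed

end

locale SIR_solution = SIR_model +
  assumes rates: "0 < \<alpha>" "\<alpha> < \<beta>"
    and initial_pos: "S 0 > 0" "I 0 > 0"
begin

definition \<kappa> :: real where
  "\<kappa> = \<beta> / (\<beta> - \<alpha>)"

definition ratio :: "real \<Rightarrow> real" where
  "ratio t = I 0 / S 0 * exp ((\<beta> - \<alpha>) * t)"

definition C :: real where
  "C = S 0 * (1 + I 0 / S 0) powr \<kappa>"

text \<open>Stated without dividing by \<open>S t\<close>, so that the set where it holds is closed.\<close>

definition invariants_hold :: "real \<Rightarrow> bool" where
  "invariants_hold t \<longleftrightarrow> I t = ratio t * S t \<and> S t * (1 + ratio t) powr \<kappa> = C"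

definition t_peak :: real where
  "t_peak = 1 / (\<beta> - \<alpha>) * ln (S 0 / I 0 * (\<beta> / \<alpha> - 1))"

lemma ratio_pos: "ratio t > 0"
  using initial_pos by (simp add: ratio_def)

lemma one_plus_ratio_pos: "1 + ratio t > 0"
  using ratio_pos[of t] by simp

lemma C_pos: "C > 0"
proof -
  have "1 + I 0 / S 0 > 0"
    using initial_pos by (intro add_pos_pos) simp_all
  then show ?thesis
    unfolding C_def using initial_pos by (intro mult_pos_pos) auto
qed

lemma invariants_hold_imp_pos:
  assumes "invariants_hold t"
  shows "S t > 0" "I t > 0"
proof -
  have "S t * (1 + ratio t) powr \<kappa> > 0"
    using assms C_pos by (simp add: invariants_hold_def)
  then show "S t > 0"
    using one_plus_ratio_pos[of t] by (simp add: zero_less_mult_iff)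
  then show "I t > 0"
    using assms ratio_pos[of t] by (simp add: invariants_hold_def)
qed

lemma closed_invariants_hold: "closed {t. invariants_hold t}"
proof -
  have "continuous_on UNIV S" "continuous_on UNIV I"
    by (simp_all add: continuous_at_imp_continuous_on isCont_S isCont_I)
  moreover have "continuous_on UNIV ratio"
    unfolding ratio_def by (intro continuous_intros)
  ultimately show ?thesis
    unfolding invariants_hold_def
    by (intro closed_Collect_conj closed_Collect_eq continuous_intros)
      (use one_plus_ratio_pos in \<open>auto simp: less_imp_neq[symmetric]\<close>)
qed

lemma invariants_hold_on_ball:
  assumes "invariants_hold t0" and pos: "ball t0 e \<subseteq> {t. S t > 0 \<and> I t > 0}" and t: "t \<in> ball t0 e"
  shows "invariants_hold t"
proof -
  have t0: "I t0 / S t0 = ratio t0" "S t0 * (1 + ratio t0) powr \<kappa> = C"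
    using assms(1) invariants_hold_imp_pos[OF assms(1)] by (simp_all add: invariants_hold_def)
  have "S t > 0"
    using pos t by auto
  have "I t / S t * exp (- (\<beta> - \<alpha>) * t) = I t0 / S t0 * exp (- (\<beta> - \<alpha>) * t0)"
    using pos t by (intro DERIV_zero_on_ball_eq scaled_ratio_has_derivative) auto
  also have "\<dots> = ratio t * exp (- (\<beta> - \<alpha>) * t)"
    by (simp add: t0 ratio_def algebra_simps flip: exp_add)
  finally have ratio_t: "I t / S t = ratio t"
    by (metis exp_not_eq_zero mult_right_cancel)
  have "S t * (1 + I t / S t) powr \<kappa> = S t0 * (1 + I t0 / S t0) powr \<kappa>"
    using pos t rates unfolding \<kappa>_def
    by (intro DERIV_zero_on_ball_eq conserved_has_derivative) (auto simp: add_pos_pos)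
  then have "S t * (1 + ratio t) powr \<kappa> = C"
    by (simp add: ratio_t t0)
  moreover have "I t = ratio t * S t"
    using ratio_t \<open>S t > 0\<close> by (simp add: field_simps)
  ultimately show ?thesis
    by (simp add: invariants_hold_def)
qed

lemma open_invariants_hold: "open {t. invariants_hold t}"
  unfolding open_contains_ball
proof
  fix t0 assume "t0 \<in> {t. invariants_hold t}"
  then have t0: "invariants_hold t0" "S t0 > 0" "I t0 > 0"
    using invariants_hold_imp_pos by auto
  have "open {t. S t > 0 \<and> I t > 0}"
    by (intro open_Collect_conj open_Collect_less continuous_intros
        continuous_at_imp_continuous_on ballI isCont_S isCont_I)
  then obtain e where "e > 0" and "ball t0 e \<subseteq> {t. S t > 0 \<and> I t > 0}"
    using t0 by (auto simp: open_contains_ball)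
  then show "\<exists>e>0. ball t0 e \<subseteq> {t. invariants_hold t}"
    using invariants_hold_on_ball[OF t0(1)] by blast
qed

lemma invariants_hold: "invariants_hold t"
proof -
  have "closed {t. invariants_hold t} \<and> open {t. invariants_hold t}"
    using closed_invariants_hold open_invariants_hold ..
  then have "{t. invariants_hold t} = {} \<or> {t. invariants_hold t} = UNIV"
    by (simp only: clopen)
  moreover have "invariants_hold 0"
    using initial_pos by (simp add: invariants_hold_def ratio_def C_def)
  ultimately show ?thesis
    by auto
qed

lemma I_eq: "I t = C * (ratio t / (1 + ratio t) powr \<kappa>)"
proof -
  have inv: "I t = ratio t * S t" "S t * (1 + ratio t) powr \<kappa> = C"
    using invariants_hold[of t] unfolding invariants_hold_def by auto
  have "S t = C / (1 + ratio t) powr \<kappa>"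
    using inv(2) one_plus_ratio_pos[of t] by (simp add: eq_divide_eq)
  then show ?thesis
    unfolding inv(1) by simp
qed

lemma ratio_t_peak: "ratio t_peak = \<beta> / \<alpha> - 1"
proof -
  have "S 0 / I 0 * (\<beta> / \<alpha> - 1) > 0"
    using rates initial_pos by simp
  then show ?thesis
    using rates initial_pos by (simp add: ratio_def t_peak_def)
qed

lemma I_le_I_peak: "I t \<le> I t_peak"
proof -
  have "\<kappa> > 1" and u: "\<beta> / \<alpha> - 1 = 1 / (\<kappa> - 1)"
    using rates by (simp_all add: \<kappa>_def field_simps)
  then have "ratio t / (1 + ratio t) powr \<kappa> \<le> ratio t_peak / (1 + ratio t_peak) powr \<kappa>"
    unfolding ratio_t_peak u by (intro div_one_plus_powr_le ratio_pos)
  then show ?thesis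
    unfolding I_eq[of t] I_eq[of t_peak] by (rule mult_left_mono) (use C_pos in simp)
qed

lemma I_peak_value:
  "I t_peak = S 0 * (\<beta> / \<alpha> - 1) * (\<alpha> / \<beta> * (1 + I 0 / S 0)) powr (\<beta> / (\<beta> - \<alpha>))"
proof -
  have "I t_peak = C * ((\<beta> / \<alpha> - 1) / (\<beta> / \<alpha>) powr \<kappa>)"
    using I_eq[of t_peak] by (simp add: ratio_t_peak)
  also have "\<dots> = S 0 * (\<beta> / \<alpha> - 1) * ((1 + I 0 / S 0) powr \<kappa> / (\<beta> / \<alpha>) powr \<kappa>)"
    by (simp add: C_def)
  also have "\<dots> = S 0 * (\<beta> / \<alpha> - 1) * (\<alpha> / \<beta> * (1 + I 0 / S 0)) powr \<kappa>"
    by (simp add: powr_mult powr_divide)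
  finally show ?thesis
    by (simp add: \<kappa>_def)
qed

lemma t_peak_pos_iff: "t_peak > 0 \<longleftrightarrow> \<beta> / \<alpha> - 1 > I 0 / S 0"
proof -
  have "S 0 / I 0 * (\<beta> / \<alpha> - 1) > 0"
    using rates initial_pos by simp
  have "t_peak > 0 \<longleftrightarrow> ln (S 0 / I 0 * (\<beta> / \<alpha> - 1)) > 0"
    using rates by (simp add: t_peak_def zero_less_divide_iff)
  also have "\<dots> \<longleftrightarrow> S 0 / I 0 * (\<beta> / \<alpha> - 1) > 1"
    using \<open>S 0 / I 0 * (\<beta> / \<alpha> - 1) > 0\<close> by (rule ln_gt_zero_iff)
  also have "\<dots> \<longleftrightarrow> \<beta> / \<alpha> - 1 > I 0 / S 0"
    using initial_pos by (simp add: field_simps)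
  finally show ?thesis .
qed

end

theorem mainTheorem2:
  fixes \<alpha> \<beta> S\<^sub>0 I\<^sub>0 :: real and S I R :: "real \<Rightarrow> real"
  assumes "\<alpha> > 0" and "\<beta> > 0" and "\<beta> > \<alpha>"
    and "S\<^sub>0 > 0" and "I\<^sub>0 > 0"
    and dS: "\<And>t. (S has_real_derivative (- \<beta> * S t * I t / (S t + I t))) (at t)"
    and dI: "\<And>t. (I has_real_derivative (\<beta> * S t * I t / (S t + I t) - \<alpha> * I t)) (at t)"
    and dR: "\<And>t. (R has_real_derivative (\<alpha> * I t)) (at t)"
    and "S 0 = S\<^sub>0" and "I 0 = I\<^sub>0"
  shows "(deriv I 0 > 0 \<longleftrightarrow> \<beta> / \<alpha> - 1 > I\<^sub>0 / S\<^sub>0)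
    \<and> (let \<tau> = 1 / (\<beta> - \<alpha>);
           t_peak = \<tau> * ln ((S\<^sub>0 / I\<^sub>0) * (\<beta> / \<alpha> - 1))
       in (\<forall>t. I t \<le> I t_peak)
          \<and> (t_peak > 0 \<longleftrightarrow> \<beta> / \<alpha> - 1 > I\<^sub>0 / S\<^sub>0)
          \<and> I t_peak = S\<^sub>0 * (\<beta> / \<alpha> - 1)
               * ((\<alpha> / \<beta>) * (1 + I\<^sub>0 / S\<^sub>0)) powr (\<beta> / (\<beta> - \<alpha>)))"
proof -
  interpret SIR_solution \<alpha> \<beta> S I
    by (intro SIR_solution.intro SIR_model.intro SIR_solution_axioms.intro dS dI)
      (use assms in simp_all)
  have peak: "1 / (\<beta> - \<alpha>) * ln (S\<^sub>0 / I\<^sub>0 * (\<beta> / \<alpha> - 1)) = t_peak"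
    unfolding t_peak_def assms(9,10) ..
  show ?thesis
    unfolding Let_def peak
    using deriv_I_0_pos_iff[OF rates(1) initial_pos] I_le_I_peak I_peak_value t_peak_pos_iff
    unfolding assms(9,10) by simp
qed

end
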